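(* Let $n_0$ be a nonnegative bounded measurable function on $(0,\infty)$ with $\lim_{x\to\infty}x^2n_0(x)=0$, and let $n$ be the global solution of the Kompaneets problem with initial data $n_0$. Then whenever $0\le s\le t$, \[ N(n_t) + \int_s^t n_\tau(0)^2\,d\tau = N(n_s). \]
   Context: The Kompaneets problem: for $x>0$, $t>0$, $\partial_t n = \partial_x J$ with $J(x,n) = x^2\partial_x n + (x^2-2x)n + n^2$, together with $\lim_{x\to\infty} J(x,n_t)=0$; no boundary condition at $x=0$. $n_t(x)=n(x,t)$. For such $n_0$ there is a unique nonnegative solution $n \in C([0,\infty);L^1)\cap L^\infty_{loc}([0,\infty);L^\infty)\cap C^{2,1}((0,\infty)^2)$ (the global solution); it satisfies, for every $T<\infty$, $x^2n_t(x)\to0$ as $x\to\infty$ uniformly for $0\le t<T$ and $x^2\partial_xn(x,t)\to 0$ uniformly on $\{1/x^2\le t<T\}$. For $t>0$, $n_t(0)=\lim_{x\to0^+}n_t(x)$ (which exists). $N(n)=\int_0^\infty n\,dx$. *)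

theory Defs
  imports "HOL-Analysis.Analysis"
begin

text \<open>Solutions are functions n x t (space variable x first, time t second),
  only their values on x > 0, t \<ge> 0 matter.\<close>

definition kompaneets_flux ::
  "(real \<Rightarrow> real \<Rightarrow> real) \<Rightarrow> (real \<Rightarrow> real \<Rightarrow> real) \<Rightarrow> real \<Rightarrow> real \<Rightarrow> real" where
  "kompaneets_flux n nx x t = x\<^sup>2 * nx x t + (x\<^sup>2 - 2 * x) * n x t + (n x t)\<^sup>2"

definition photon_number :: "(real \<Rightarrow> real \<Rightarrow> real) \<Rightarrow> real \<Rightarrow> real" where
  "photon_number n t = integral {0<..} (\<lambda>x. n x t)"

definition boundary_value :: "(real \<Rightarrow> real \<Rightarrow> real) \<Rightarrow> real \<Rightarrow> real" where
  "boundary_value n t = Lim (at_right 0) (\<lambda>x. n x t)"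

text \<open>n is the (unique) nonnegative global solution of the Kompaneets problem with
  initial datum n0, in the class
  C([0,\<infinity>);L^1) \<inter> L^\<infinity>_loc([0,\<infinity>);L^\<infinity>) \<inter> C^{2,1}((0,\<infinity>)^2),
  together with the properties the global solution is known to satisfy.\<close>
definition kompaneets_global_solution ::
  "(real \<Rightarrow> real) \<Rightarrow> (real \<Rightarrow> real \<Rightarrow> real) \<Rightarrow> bool" where
  "kompaneets_global_solution n0 n \<longleftrightarrow>
     \<comment> \<open>initial datum and nonnegativity\<close>
     (\<forall>x>0. n x 0 = n0 x) \<and>
     (\<forall>x>0. \<forall>t\<ge>0. 0 \<le> n x t) \<and>
     \<comment> \<open>C([0,\<infinity>);L^1)\<close>
     (\<forall>t\<ge>0. (\<lambda>x. n x t) absolutely_integrable_on {0<..}) \<and>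
     (\<forall>t\<ge>0. ((\<lambda>s. integral {0<..} (\<lambda>x. \<bar>n x s - n x t\<bar>)) \<longlongrightarrow> 0)
                 (at t within {0..})) \<and>
     \<comment> \<open>L^\<infinity>_loc([0,\<infinity>);L^\<infinity>)\<close>
     (\<forall>T. \<exists>M. \<forall>t\<in>{0..T}. \<forall>x>0. \<bar>n x t\<bar> \<le> M) \<and>
     \<comment> \<open>C^{2,1} on (0,\<infinity>)^2, the equation, boundary condition and decay\<close>
     (\<exists>nx nxx nt.
        continuous_on ({0<..} \<times> {0<..}) (\<lambda>(x,t). n x t) \<and>
        continuous_on ({0<..} \<times> {0<..}) (\<lambda>(x,t). nx x t) \<and>
        continuous_on ({0<..} \<times> {0<..}) (\<lambda>(x,t). nxx x t) \<and>
        continuous_on ({0<..} \<times> {0<..}) (\<lambda>(x,t). nt x t) \<and>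
        (\<forall>x>0. \<forall>t>0.
           ((\<lambda>y. n y t) has_real_derivative nx x t) (at x) \<and>
           ((\<lambda>y. nx y t) has_real_derivative nxx x t) (at x) \<and>
           ((\<lambda>s. n x s) has_real_derivative nt x t) (at t) \<and>
           \<comment> \<open>\<partial>_t n = \<partial>_x J\<close>
           ((\<lambda>y. kompaneets_flux n nx y t) has_real_derivative nt x t) (at x)) \<and>
        \<comment> \<open>lim_{x\<rightarrow>\<infinity>} J(x,n_t) = 0\<close>
        (\<forall>t>0. ((\<lambda>x. kompaneets_flux n nx x t) \<longlongrightarrow> 0) at_top) \<and>
        \<comment> \<open>x^2 n_t(x) \<rightarrow> 0 uniformly for 0 \<le> t < T\<close>
        (\<forall>T. \<forall>e>0. \<exists>R. \<forall>x\<ge>R. \<forall>t. 0 \<le> t \<and> t < T \<longrightarrow> \<bar>x\<^sup>2 * n x t\<bar> < e) \<and>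
        \<comment> \<open>x^2 \<partial>_x n \<rightarrow> 0 uniformly on {1/x^2 \<le> t < T}\<close>
        (\<forall>T. \<forall>e>0. \<exists>R>0. \<forall>x\<ge>R. \<forall>t. 1 / x\<^sup>2 \<le> t \<and> t < T \<longrightarrow> \<bar>x\<^sup>2 * nx x t\<bar> < e)) \<and>
     \<comment> \<open>n_t(0) = lim_{x\<rightarrow>0+} n_t(x) exists for t > 0\<close>
     (\<forall>t>0. \<exists>L. ((\<lambda>x. n x t) \<longlongrightarrow> L) (at_right 0))"

end

theory Submission
  imports Defs
begin

text \<open>
  For \<open>0 < s \<le> t\<close>, integrating \<open>\<partial>\<^sub>t n = \<partial>\<^sub>x J\<close> over \<open>[a,b] \<times> [s,t]\<close> gives
  \<open>\<integral>\<^sub>a\<^sup>b (n\<^sub>s - n\<^sub>t) = W a - W b\<close> with \<open>W y = \<integral>\<^sub>s\<^sup>t J(y,\<tau>) d\<tau>\<close>.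
  The uniform decay of \<open>x\<^sup>2 n\<close> and \<open>x\<^sup>2 \<partial>\<^sub>x n\<close> makes \<open>W b \<rightarrow> 0\<close> as \<open>b \<rightarrow> \<infinity>\<close>, hence
  \<open>W a \<rightarrow> N(n\<^sub>s) - N(n\<^sub>t)\<close> as \<open>a \<rightarrow> 0+\<close>.
  Near the origin split \<open>J = \<partial>\<^sub>x(x\<^sup>2 n) + (x\<^sup>2 - 4x) n + n\<^sup>2\<close>: then \<open>W = Q' + V\<close>, where
  \<open>Q a = \<integral>\<^sub>s\<^sup>t a\<^sup>2 n(a,\<tau>) d\<tau> = O(a\<^sup>2)\<close> and \<open>V a \<rightarrow> \<integral>\<^sub>s\<^sup>t n\<^sub>\<tau>(0)\<^sup>2 d\<tau>\<close> by dominated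
  convergence. Since \<open>Q'\<close> has a limit at \<open>0+\<close> and \<open>Q = O(a\<^sup>2)\<close>, L'Hopital's rule applied
  to \<open>Q a / a\<close> shows that this limit is \<open>0\<close>, which is the identity.
  The case \<open>s = 0\<close> follows by monotone convergence, using the \<open>L\<^sup>1\<close>-continuity of the
  solution at time \<open>0\<close>.
\<close>

lemma deriv_limit_eq_0_if_quadratic_bound:
  fixes Q D :: "real \<Rightarrow> real"
  assumes der: "\<And>a. a > 0 \<Longrightarrow> (Q has_real_derivative D a) (at a)"
    and bound: "\<And>a. a > 0 \<Longrightarrow> \<bar>Q a\<bar> \<le> K * a\<^sup>2"
    and lim: "(D \<longlongrightarrow> L) (at_right 0)"
  shows "L = 0"
proof -
  have ev_pos: "\<forall>\<^sub>F a in at_right 0. a > (0::real)"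
    by (simp add: eventually_at_right_less)
  have "((\<lambda>a. K * a\<^sup>2) \<longlongrightarrow> 0) (at_right 0)" "((\<lambda>a. K * a) \<longlongrightarrow> 0) (at_right 0)"
    by (auto intro!: tendsto_eq_intros)
  moreover have "\<forall>\<^sub>F a in at_right 0. norm (Q a) \<le> K * a\<^sup>2"
    using ev_pos by eventually_elim (simp add: bound)
  moreover have "\<forall>\<^sub>F a in at_right 0. norm (Q a / a) \<le> K * a"
    using ev_pos by eventually_elim
      (use bound in \<open>auto simp: abs_divide divide_le_eq power2_eq_square mult.assoc\<close>)
  ultimately have Q0: "(Q \<longlongrightarrow> 0) (at_right 0)" and Q_div: "((\<lambda>a. Q a / a) \<longlongrightarrow> 0) (at_right 0)"
    by (auto intro: Lim_null_comparison)
  have "((\<lambda>a. Q a / a) \<longlongrightarrow> L) (at_right 0)"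
  proof (rule lhopital_right_0[OF Q0 tendsto_ident_at])
    show "\<forall>\<^sub>F a in at_right 0. a \<noteq> (0::real)"
      by (rule eventually_mono[OF ev_pos]) simp
    show "\<forall>\<^sub>F a in at_right 0. (1::real) \<noteq> 0"
      by simp
    show "\<forall>\<^sub>F a in at_right 0. (Q has_real_derivative D a) (at a)"
      using ev_pos by (auto elim: eventually_mono intro: der)
    show "\<forall>\<^sub>F a in at_right 0. ((\<lambda>a. a) has_real_derivative 1) (at a)"
      by (simp add: DERIV_ident)
    show "((\<lambda>a. D a / 1) \<longlongrightarrow> L) (at_right 0)"
      using lim by simp
  qed
  with Q_div show ?thesis
    using tendsto_unique[OF trivial_limit_at_right_real] by blast
qed

lemma continuous_on_slice_fst:
  assumes "continuous_on (A \<times> B) (\<lambda>(x, y). f x y)" "y \<in> B"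
  shows "continuous_on A (\<lambda>x. f x y)"
proof -
  have "continuous_on A (\<lambda>x. (\<lambda>(x, y). f x y) (x, y))"
    by (rule continuous_on_compose2[OF assms(1)]) (use assms(2) in \<open>auto intro!: continuous_intros\<close>)
  then show ?thesis by simp
qed

lemma continuous_on_slice_snd:
  assumes "continuous_on (A \<times> B) (\<lambda>(x, y). f x y)" "x \<in> A"
  shows "continuous_on B (f x)"
proof -
  have "continuous_on B (\<lambda>y. (\<lambda>(x, y). f x y) (x, y))"
    by (rule continuous_on_compose2[OF assms(1)]) (use assms(2) in \<open>auto intro!: continuous_intros\<close>)
  then show ?thesis by simp
qed

lemma tendsto_integral_atLeastAtMost_at_top:
  fixes f :: "real \<Rightarrow> 'a::euclidean_space"
  assumes "f absolutely_integrable_on {a..}"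
  shows "((\<lambda>b. integral {a..b} f) \<longlongrightarrow> integral {a..} f) at_top"
proof -
  have "((\<lambda>b. LINT x:{a..b}|lebesgue. f x) \<longlongrightarrow> (LINT x:{a..}|lebesgue. f x)) at_top"
    using assms by (intro tendsto_set_lebesgue_integral_at_top) auto
  moreover have "(LINT x:{a..b}|lebesgue. f x) = integral {a..b} f" for b
    by (rule set_lebesgue_integral_eq_integral(2), rule set_integrable_subset[OF assms]) auto
  ultimately show ?thesis
    using set_lebesgue_integral_eq_integral(2)[OF assms] by simp
qed

lemma tendsto_integral_atLeast_at_right:
  fixes f :: "real \<Rightarrow> 'a::euclidean_space"
  assumes f: "f absolutely_integrable_on {a<..}"
  shows "((\<lambda>c. integral {c..} f) \<longlongrightarrow> integral {a<..} f) (at_right a)"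
proof (rule tendsto_at_right_sequentially[of a "a + 1"])
  fix S :: "nat \<Rightarrow> real"
  assume S: "\<And>n. a < S n" "\<And>n. S n < a + 1" "decseq S" "S \<longlonglongrightarrow> a"
  have union: "(\<Union>n. {S n..}) = {a<..}"
  proof (intro antisym subsetI)
    fix x assume "x \<in> (\<Union>n. {S n..})"
    then obtain n where "S n \<le> x" by auto
    with S(1)[of n] show "x \<in> {a<..}" by auto
  next
    fix x assume "x \<in> {a<..}"
    then have "\<forall>\<^sub>F n in sequentially. S n < x"
      using order_tendstoD(2)[OF S(4)] by auto
    then obtain n where "S n < x"
      using eventually_sequentially by auto
    then show "x \<in> (\<Union>n. {S n..})" by (auto intro: less_imp_le)
  qed
  have int_S: "f absolutely_integrable_on {S n..}" for n
    using S(1)[of n] by (intro set_integrable_subset[OF f]) auto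
  have "(\<lambda>n. LINT x:{S n..}|lebesgue. f x) \<longlonglongrightarrow> (LINT x:(\<Union>n. {S n..})|lebesgue. f x)"
    by (rule set_integral_cont_up) (use S(3) f union in \<open>auto simp: incseq_def decseq_def\<close>)
  then show "(\<lambda>n. integral {S n..} f) \<longlonglongrightarrow> integral {a<..} f"
    using union int_S f by (simp add: set_lebesgue_integral_eq_integral)
qed simp

lemma decseq_converging_to_left_endpoint:
  fixes a b :: real
  assumes "a < b"
  obtains X where "\<And>n. a < X n" "\<And>n. X n < b" "decseq X" "X \<longlonglongrightarrow> a"
proof
  define X where "X n = a + (b - a) / real (n + 2)" for n
  show "a < X n" "X n < b" for n
  proof -
    have "0 < (b - a) / real (n + 2)" "(b - a) / real (n + 2) < b - a"
      using \<open>a < b\<close> by (simp_all add: divide_less_eq)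
    then show "a < X n" "X n < b"
      unfolding X_def by linarith+
  qed
  show "decseq X"
    unfolding decseq_def X_def using \<open>a < b\<close> by (auto intro!: divide_left_mono)
  have "(\<lambda>n. (b - a) / real (n + 2)) \<longlonglongrightarrow> 0"
    using LIMSEQ_ignore_initial_segment[OF lim_const_over_n[of "b - a"], of 2] by simp
  then show "X \<longlonglongrightarrow> a"
    unfolding X_def using tendsto_add[OF tendsto_const[of a]] by fastforce
qed

lemma dominated_convergence_at_right:
  fixes f :: "real \<Rightarrow> 'n::euclidean_space \<Rightarrow> real"
  assumes "a < b"
    and f: "\<And>y. a < y \<Longrightarrow> y < b \<Longrightarrow> f y integrable_on S"
    and h: "h integrable_on S"
    and le: "\<And>y x. a < y \<Longrightarrow> y < b \<Longrightarrow> x \<in> S \<Longrightarrow> \<bar>f y x\<bar> \<le> h x"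
    and lim: "\<And>x. x \<in> S \<Longrightarrow> ((\<lambda>y. f y x) \<longlongrightarrow> g x) (at_right a)"
  shows "g integrable_on S" "((\<lambda>y. integral S (f y)) \<longlongrightarrow> integral S g) (at_right a)"
proof -
  have seq: "g integrable_on S \<and> (\<lambda>n. integral S (f (X n))) \<longlonglongrightarrow> integral S g"
    if X: "\<And>n. a < X n" "\<And>n. X n < b" "X \<longlonglongrightarrow> a" for X
  proof -
    have "(\<lambda>n. f (X n) x) \<longlonglongrightarrow> g x" if "x \<in> S" for x
      using lim[OF that] X unfolding tendsto_at_iff_sequentially by (force simp: o_def)
    then show ?thesis
      using dominated_convergence[of "\<lambda>n. f (X n)" S h g] f h le X by auto
  qed
  obtain X where "\<And>n. a < X n" "\<And>n. X n < b" "X \<longlonglongrightarrow> a"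
    using decseq_converging_to_left_endpoint[OF \<open>a < b\<close>] by metis
  then show "g integrable_on S"
    using seq by blast
  show "((\<lambda>y. integral S (f y)) \<longlongrightarrow> integral S g) (at_right a)"
    using seq by (intro tendsto_at_right_sequentially[OF \<open>a < b\<close>]) auto
qed

lemma has_integral_Icc_of_tendsto_at_right:
  fixes g F :: "real \<Rightarrow> real"
  assumes "a < b"
    and nonneg: "\<And>x. a < x \<Longrightarrow> x < b \<Longrightarrow> 0 \<le> g x"
    and int: "\<And>c. a < c \<Longrightarrow> c < b \<Longrightarrow> (g has_integral F c) {c..b}"
    and lim: "(F \<longlongrightarrow> I) (at_right a)"
  shows "(g has_integral I) {a..b}"
proof -
  obtain X where X: "\<And>n. a < X n" "\<And>n. X n < b" "decseq X" "X \<longlonglongrightarrow> a"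
    using decseq_converging_to_left_endpoint[OF \<open>a < b\<close>] by metis
  define f where "f n x = (if x \<in> {X n<..<b} then g x else 0)" for n x
  have f_int: "(f n has_integral F (X n)) {a<..<b}" for n
  proof -
    have "(g has_integral F (X n)) {X n<..<b}"
      using int[OF X(1,2)] by (simp add: has_integral_Icc_iff_Ioo)
    then show ?thesis
      unfolding f_def using X(1)[of n] by (intro has_integral_restrict[THEN iffD2]) auto
  qed
  then have integral_f: "(\<lambda>n. integral {a<..<b} (f n)) = (\<lambda>n. F (X n))"
    by (intro ext integral_unique)
  have F_lim: "(\<lambda>n. F (X n)) \<longlonglongrightarrow> I"
    using lim X unfolding tendsto_at_iff_sequentially by (force simp: o_def)
  have "g integrable_on {a<..<b} \<and> (\<lambda>n. integral {a<..<b} (f n)) \<longlonglongrightarrow> integral {a<..<b} g"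
  proof (rule monotone_convergence_increasing)
    show "f n integrable_on {a<..<b}" for n
      using f_int by blast
    show "f n x \<le> f (Suc n) x" if "x \<in> {a<..<b}" for n x
      using that nonneg[of x] decseq_SucD[OF X(3), of n] by (auto simp: f_def)
    show "(\<lambda>n. f n x) \<longlonglongrightarrow> g x" if "x \<in> {a<..<b}" for x
    proof (rule tendsto_eventually)
      have "\<forall>\<^sub>F n in sequentially. X n < x"
        using order_tendstoD(2)[OF X(4), of x] that by simp
      then show "\<forall>\<^sub>F n in sequentially. f n x = g x"
        by eventually_elim (use that in \<open>simp add: f_def\<close>)
    qed
    show "bounded (range (\<lambda>n. integral {a<..<b} (f n)))"
      unfolding integral_f by (rule convergent_imp_bounded[OF F_lim])
  qed
  then have "g integrable_on {a<..<b}" "(\<lambda>n. F (X n)) \<longlonglongrightarrow> integral {a<..<b} g"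
    by (simp_all only: integral_f)
  with F_lim have "(g has_integral I) {a<..<b}"
    using LIMSEQ_unique has_integral_integrable_integral by blast
  then show ?thesis
    by (simp add: has_integral_Icc_iff_Ioo)
qed

lemma abs_kompaneets_flux_le:
  assumes x: "x \<ge> 1" and e: "e \<le> 1"
    and n: "\<bar>x\<^sup>2 * n x t\<bar> < e" and nx: "\<bar>x\<^sup>2 * nx x t\<bar> < e"
  shows "\<bar>kompaneets_flux n nx x t\<bar> \<le> 5 * e"
proof -
  have n_le: "\<bar>n x t\<bar> \<le> \<bar>x * n x t\<bar>"
    using x by (simp add: abs_mult mult_le_cancel_right1)
  have xn_le: "\<bar>x * n x t\<bar> \<le> \<bar>x\<^sup>2 * n x t\<bar>"
    using x by (simp add: abs_mult power2_eq_square mult_right_mono)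
  have "(n x t)\<^sup>2 = \<bar>n x t\<bar> * \<bar>n x t\<bar>"
    by (simp add: power2_eq_square)
  also have "\<dots> \<le> e * 1"
    using n_le xn_le n e by (intro mult_mono) auto
  finally have n2: "(n x t)\<^sup>2 \<le> e"
    by simp
  have "kompaneets_flux n nx x t = x\<^sup>2 * nx x t + x\<^sup>2 * n x t - 2 * (x * n x t) + (n x t)\<^sup>2"
    by (simp add: kompaneets_flux_def algebra_simps)
  moreover have "\<bar>x * n x t\<bar> < e"
    using xn_le n by linarith
  ultimately show ?thesis
    using n nx n2 zero_le_power2[of "n x t"] by linarith
qed

locale kompaneets_regular =
  fixes n nx nt :: "real \<Rightarrow> real \<Rightarrow> real"
  assumes integrable: "\<And>t. t \<ge> 0 \<Longrightarrow> (\<lambda>x. n x t) absolutely_integrable_on {0<..}"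
    and L1_continuous: "\<And>t. t \<ge> 0 \<Longrightarrow>
      ((\<lambda>s. integral {0<..} (\<lambda>x. \<bar>n x s - n x t\<bar>)) \<longlongrightarrow> 0) (at t within {0..})"
    and locally_bounded: "\<And>T. \<exists>M. \<forall>t\<in>{0..T}. \<forall>x>0. \<bar>n x t\<bar> \<le> M"
    and continuous_n: "continuous_on ({0<..} \<times> {0<..}) (\<lambda>(x, t). n x t)"
    and continuous_nx: "continuous_on ({0<..} \<times> {0<..}) (\<lambda>(x, t). nx x t)"
    and continuous_nt: "continuous_on ({0<..} \<times> {0<..}) (\<lambda>(x, t). nt x t)"
    and has_derivative_x: "\<And>x t. x > 0 \<Longrightarrow> t > 0 \<Longrightarrow> ((\<lambda>y. n y t) has_real_derivative nx x t) (at x)"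
    and has_derivative_t: "\<And>x t. x > 0 \<Longrightarrow> t > 0 \<Longrightarrow> (n x has_real_derivative nt x t) (at t)"
    and kompaneets_equation: "\<And>x t. x > 0 \<Longrightarrow> t > 0 \<Longrightarrow>
      ((\<lambda>y. kompaneets_flux n nx y t) has_real_derivative nt x t) (at x)"
    and decay: "\<And>T e. e > 0 \<Longrightarrow> \<exists>R. \<forall>x\<ge>R. \<forall>t. 0 \<le> t \<and> t < T \<longrightarrow> \<bar>x\<^sup>2 * n x t\<bar> < e"
    and decay_nx: "\<And>T e. e > 0 \<Longrightarrow>
      \<exists>R>0. \<forall>x\<ge>R. \<forall>t. 1 / x\<^sup>2 \<le> t \<and> t < T \<longrightarrow> \<bar>x\<^sup>2 * nx x t\<bar> < e"
    and boundary_limit: "\<And>t. t > 0 \<Longrightarrow> \<exists>L. ((\<lambda>x. n x t) \<longlongrightarrow> L) (at_right 0)"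

lemma kompaneets_global_solution_imp_regular:
  assumes "kompaneets_global_solution n0 n"
  obtains nx nt where "kompaneets_regular n nx nt"
  using assms unfolding kompaneets_global_solution_def
proof (elim conjE exE)
  fix nx nxx nt
  assume "\<forall>t\<ge>0. (\<lambda>x. n x t) absolutely_integrable_on {0<..}"
    and "\<forall>t\<ge>0. ((\<lambda>s. integral {0<..} (\<lambda>x. \<bar>n x s - n x t\<bar>)) \<longlongrightarrow> 0) (at t within {0..})"
    and "\<forall>T. \<exists>M. \<forall>t\<in>{0..T}. \<forall>x>0. \<bar>n x t\<bar> \<le> M"
    and "continuous_on ({0<..} \<times> {0<..}) (\<lambda>(x, t). n x t)"
    and "continuous_on ({0<..} \<times> {0<..}) (\<lambda>(x, t). nx x t)"
    and "continuous_on ({0<..} \<times> {0<..}) (\<lambda>(x, t). nt x t)"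
    and "\<forall>x>0. \<forall>t>0. ((\<lambda>y. n y t) has_real_derivative nx x t) (at x) \<and>
       ((\<lambda>y. nx y t) has_real_derivative nxx x t) (at x) \<and>
       ((\<lambda>s. n x s) has_real_derivative nt x t) (at t) \<and>
       ((\<lambda>y. kompaneets_flux n nx y t) has_real_derivative nt x t) (at x)"
    and "\<forall>T. \<forall>e>0. \<exists>R. \<forall>x\<ge>R. \<forall>t. 0 \<le> t \<and> t < T \<longrightarrow> \<bar>x\<^sup>2 * n x t\<bar> < e"
    and "\<forall>T. \<forall>e>0. \<exists>R>0. \<forall>x\<ge>R. \<forall>t. 1 / x\<^sup>2 \<le> t \<and> t < T \<longrightarrow> \<bar>x\<^sup>2 * nx x t\<bar> < e"
    and "\<forall>t>0. \<exists>L. ((\<lambda>x. n x t) \<longlongrightarrow> L) (at_right 0)"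
  then have "kompaneets_regular n nx nt"
    by unfold_locales simp_all
  then show ?thesis ..
qed


context kompaneets_regular
begin

abbreviation J :: "real \<Rightarrow> real \<Rightarrow> real" where
  "J \<equiv> kompaneets_flux n nx"

lemma continuous_on_n_time: "x > 0 \<Longrightarrow> S \<subseteq> {0<..} \<Longrightarrow> continuous_on S (n x)"
  using continuous_on_slice_snd[OF continuous_n] by (blast intro: continuous_on_subset)

lemma continuous_on_n_space: "t > 0 \<Longrightarrow> S \<subseteq> {0<..} \<Longrightarrow> continuous_on S (\<lambda>x. n x t)"
  using continuous_on_slice_fst[OF continuous_n] by (blast intro: continuous_on_subset)

lemma continuous_on_nx_time: "x > 0 \<Longrightarrow> S \<subseteq> {0<..} \<Longrightarrow> continuous_on S (nx x)"
  using continuous_on_slice_snd[OF continuous_nx] by (blast intro: continuous_on_subset)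

lemma continuous_on_flux_time: "x > 0 \<Longrightarrow> S \<subseteq> {0<..} \<Longrightarrow> continuous_on S (J x)"
  unfolding kompaneets_flux_def
  by (intro continuous_intros continuous_on_n_time continuous_on_nx_time)



lemma has_real_derivative_mass_on_interval:
  assumes "0 < a" "a \<le> b" "t > 0"
  shows "((\<lambda>s. integral {a..b} (\<lambda>x. n x s)) has_real_derivative J b t - J a t) (at t)"
proof -
  have "((\<lambda>s. integral (cbox a b) (\<lambda>x. n x s)) has_real_derivative integral (cbox a b) (\<lambda>x. nt x t))
      (at t within {0<..})"
  proof (rule leibniz_rule_field_derivative[where fx = "\<lambda>s x. nt x s"])
    show "((\<lambda>s. n x s) has_real_derivative nt x s) (at s within {0<..})"
      if "s \<in> {0<..}" "x \<in> cbox a b" for s x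
      using that assms by (auto intro!: has_field_derivative_at_within[OF has_derivative_t])
    show "(\<lambda>x. n x s) integrable_on cbox a b" if "s \<in> {0<..}" for s
      using that assms by (intro integrable_continuous continuous_on_n_space) auto
    have "continuous_on ({0<..} \<times> {0<..}) (\<lambda>(s, x). nt x s)"
      by (rule continuous_on_swap_args[OF continuous_nt])
    then show "continuous_on ({0<..} \<times> cbox a b) (\<lambda>(s, x). nt x s)"
      by (rule continuous_on_subset) (use assms in auto)
    show "t \<in> {0<..}" "convex {0::real<..}"
      using assms by auto
  qed
  moreover have "((\<lambda>x. nt x t) has_integral J b t - J a t) {a..b}"
  proof (rule fundamental_theorem_of_calculus)
    show "((\<lambda>y. J y t) has_vector_derivative nt x t) (at x within {a..b})" if "x \<in> {a..b}" for x
      unfolding has_real_derivative_iff_has_vector_derivative[symmetric]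
      using that assms by (auto intro!: has_field_derivative_at_within[OF kompaneets_equation])
  qed (use assms in simp)
  moreover have "at t within {0<..} = at t"
    using assms by (intro at_within_open) auto
  ultimately show ?thesis
    by (simp add: integral_unique)
qed


lemma integrable_flux_time: "x > 0 \<Longrightarrow> 0 < s \<Longrightarrow> J x integrable_on {s..t}"
  by (intro integrable_continuous_interval continuous_on_flux_time) auto

lemma integral_mass_difference_eq_flux:
  assumes "0 < s" "s \<le> t" "0 < a" "a \<le> b"
  shows "integral {a..b} (\<lambda>x. n x s - n x t) = integral {s..t} (J a) - integral {s..t} (J b)"
proof -
  define F where "F \<tau> = integral {a..b} (\<lambda>x. n x \<tau>)" for \<tau>
  have "((\<lambda>\<tau>. J b \<tau> - J a \<tau>) has_integral F t - F s) {s..t}"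
  proof (rule fundamental_theorem_of_calculus)
    show "(F has_vector_derivative J b \<tau> - J a \<tau>) (at \<tau> within {s..t})" if "\<tau> \<in> {s..t}" for \<tau>
      unfolding F_def has_real_derivative_iff_has_vector_derivative[symmetric]
      using that assms by (auto intro!: has_field_derivative_at_within[OF has_real_derivative_mass_on_interval])
  qed fact
  then have "F t - F s = integral {s..t} (\<lambda>\<tau>. J b \<tau> - J a \<tau>)"
    by (simp add: integral_unique)
  also have "\<dots> = integral {s..t} (J b) - integral {s..t} (J a)"
    using assms by (intro integral_diff integrable_flux_time) auto
  finally show ?thesis
    using assms unfolding F_def
    by (subst integral_diff) (auto intro!: integrable_continuous_interval continuous_on_n_space)
qed

lemma flux_eventually_uniformly_small:
  assumes "0 < s" "0 < e"
  shows "\<forall>\<^sub>F x in at_top. \<forall>\<tau>\<in>{s..t}. \<bar>J x \<tau>\<bar> \<le> e"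
proof -
  define e' where "e' = min 1 (e / 5)"
  have "0 < e'" "e' \<le> 1" "5 * e' \<le> e"
    using \<open>0 < e\<close> by (auto simp: e'_def)
  obtain R1 where R1: "\<And>x \<tau>. x \<ge> R1 \<Longrightarrow> 0 \<le> \<tau> \<Longrightarrow> \<tau> < t + 1 \<Longrightarrow> \<bar>x\<^sup>2 * n x \<tau>\<bar> < e'"
    using decay[OF \<open>0 < e'\<close>, of "t + 1"] by blast
  obtain R2 where R2: "\<And>x \<tau>. x \<ge> R2 \<Longrightarrow> 1 / x\<^sup>2 \<le> \<tau> \<Longrightarrow> \<tau> < t + 1 \<Longrightarrow> \<bar>x\<^sup>2 * nx x \<tau>\<bar> < e'"
    using decay_nx[OF \<open>0 < e'\<close>, of "t + 1"] by blast
  show ?thesis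
    unfolding eventually_at_top_linorder
  proof (intro exI allI impI ballI)
    fix x \<tau> assume x: "max (max R1 R2) (max 1 (1 / s)) \<le> x" and \<tau>: "\<tau> \<in> {s..t}"
    have "1 / x\<^sup>2 \<le> 1 / x"
      using x by (intro divide_left_mono) (auto simp: power2_eq_square)
    also have "1 / x \<le> s"
      using x \<open>0 < s\<close> by (auto simp: divide_le_eq mult.commute)
    finally have "1 / x\<^sup>2 \<le> \<tau>"
      using \<tau> by simp
    then have "\<bar>J x \<tau>\<bar> \<le> 5 * e'"
      using x \<tau> \<open>0 < s\<close> \<open>e' \<le> 1\<close> by (intro abs_kompaneets_flux_le R1 R2) auto
    then show "\<bar>J x \<tau>\<bar> \<le> e"
      using \<open>5 * e' \<le> e\<close> by linarith
  qed
qed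

lemma flux_time_integral_tendsto_0:
  assumes "0 < s" "s \<le> t"
  shows "((\<lambda>x. integral {s..t} (J x)) \<longlongrightarrow> 0) at_top"
proof (rule tendstoI)
  fix e :: real assume "0 < e"
  define e' where "e' = e / (t - s + 1)"
  have "0 < e'" "e' * (t - s) < e"
    using \<open>0 < e\<close> assms by (auto simp: e'_def field_simps)
  have "\<forall>\<^sub>F x in at_top. x > 0 \<and> (\<forall>\<tau>\<in>{s..t}. \<bar>J x \<tau>\<bar> \<le> e')"
    using eventually_gt_at_top flux_eventually_uniformly_small[OF \<open>0 < s\<close> \<open>0 < e'\<close>]
    by (rule eventually_conj)
  then show "\<forall>\<^sub>F x in at_top. dist (integral {s..t} (J x)) 0 < e"
  proof eventually_elim
    case (elim x)
    then have "norm (integral {s..t} (J x)) \<le> e' * (t - s)"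
      using assms by (intro integral_bound continuous_on_flux_time) auto
    with \<open>e' * (t - s) < e\<close> show ?case
      by simp
  qed
qed


lemma absolutely_integrable_mass_difference:
  "0 \<le> s \<Longrightarrow> 0 \<le> t \<Longrightarrow> (\<lambda>x. n x s - n x t) absolutely_integrable_on {0<..}"
  by (intro set_integral_diff integrable)

lemma flux_time_integral_eq_tail:
  assumes "0 < s" "s \<le> t" "0 < a"
  shows "integral {s..t} (J a) = integral {a..} (\<lambda>x. n x s - n x t)"
proof -
  have tail: "(\<lambda>x. n x s - n x t) absolutely_integrable_on {a..}"
    using assms by (intro set_integrable_subset[OF absolutely_integrable_mass_difference]) auto
  have "\<forall>\<^sub>F b in at_top. integral {s..t} (J a) - integral {s..t} (J b) = integral {a..b} (\<lambda>x. n x s - n x t)"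
    using eventually_ge_at_top[of a]
    by eventually_elim (use assms in \<open>simp add: integral_mass_difference_eq_flux\<close>)
  moreover have "((\<lambda>b. integral {s..t} (J a) - integral {s..t} (J b)) \<longlongrightarrow> integral {s..t} (J a) - 0) at_top"
    using assms by (intro tendsto_diff tendsto_const flux_time_integral_tendsto_0)
  ultimately have "((\<lambda>b. integral {a..b} (\<lambda>x. n x s - n x t)) \<longlongrightarrow> integral {s..t} (J a)) at_top"
    by (simp add: tendsto_cong)
  with tendsto_integral_atLeastAtMost_at_top[OF tail] show ?thesis
    using tendsto_unique[OF trivial_limit_at_top_linorder] by blast
qed

lemma flux_time_integral_tendsto_mass_difference:
  assumes "0 < s" "s \<le> t"
  shows "((\<lambda>a. integral {s..t} (J a)) \<longlongrightarrow> photon_number n s - photon_number n t) (at_right 0)"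
proof -
  have "\<forall>\<^sub>F a in at_right 0. integral {a..} (\<lambda>x. n x s - n x t) = integral {s..t} (J a)"
    using eventually_at_right_less[of 0] by eventually_elim (use assms in \<open>simp add: flux_time_integral_eq_tail\<close>)
  moreover have "integral {0<..} (\<lambda>x. n x s - n x t) = photon_number n s - photon_number n t"
    unfolding photon_number_def using assms
    by (intro integral_diff set_lebesgue_integral_eq_integral(1) integrable) auto
  ultimately show ?thesis
    using tendsto_integral_atLeast_at_right[OF absolutely_integrable_mass_difference, of s t]
      assms by (simp add: tendsto_cong)
qed


lemma flux_eq_derivative_plus_lower_order:
  "J a \<tau> = (2 * a * n a \<tau> + a\<^sup>2 * nx a \<tau>) + ((a\<^sup>2 - 4 * a) * n a \<tau> + (n a \<tau>)\<^sup>2)"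
  by (simp add: kompaneets_flux_def algebra_simps)

lemma has_real_derivative_weighted_time_integral:
  assumes "0 < s" "0 < a"
  shows "((\<lambda>a. integral {s..t} (\<lambda>\<tau>. a\<^sup>2 * n a \<tau>)) has_real_derivative
      integral {s..t} (J a) - integral {s..t} (\<lambda>\<tau>. (a\<^sup>2 - 4 * a) * n a \<tau> + (n a \<tau>)\<^sup>2)) (at a)"
proof -
  have sub: "{s..t} \<subseteq> {0<..}"
    using assms by auto
  have "((\<lambda>a. integral (cbox s t) (\<lambda>\<tau>. a\<^sup>2 * n a \<tau>)) has_real_derivative
      integral (cbox s t) (\<lambda>\<tau>. 2 * a * n a \<tau> + a\<^sup>2 * nx a \<tau>)) (at a within {0<..})"
  proof (rule leibniz_rule_field_derivative[where fx = "\<lambda>a \<tau>. 2 * a * n a \<tau> + a\<^sup>2 * nx a \<tau>"])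
    show "((\<lambda>a. a\<^sup>2 * n a \<tau>) has_real_derivative 2 * b * n b \<tau> + b\<^sup>2 * nx b \<tau>) (at b within {0<..})"
      if "b \<in> {0<..}" "\<tau> \<in> cbox s t" for b \<tau>
      using that sub
      by (auto intro!: derivative_eq_intros has_field_derivative_at_within[OF has_derivative_x]
          simp: power2_eq_square)
    show "(\<lambda>\<tau>. b\<^sup>2 * n b \<tau>) integrable_on cbox s t" if "b \<in> {0<..}" for b
      using that sub by (intro integrable_continuous continuous_intros continuous_on_n_time) auto
    have "continuous_on ({0<..} \<times> {s..t}) (\<lambda>(x, \<tau>). n x \<tau>)"
      "continuous_on ({0<..} \<times> {s..t}) (\<lambda>(x, \<tau>). nx x \<tau>)"
      using sub by (auto intro: continuous_on_subset[OF continuous_n] continuous_on_subset[OF continuous_nx])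
    then show "continuous_on ({0<..} \<times> cbox s t) (\<lambda>(a, \<tau>). 2 * a * n a \<tau> + a\<^sup>2 * nx a \<tau>)"
      by (auto simp: case_prod_beta intro!: continuous_intros)
    show "a \<in> {0<..}" "convex {0::real<..}"
      using assms by auto
  qed
  moreover have "integral {s..t} (J a) = integral {s..t} (\<lambda>\<tau>. 2 * a * n a \<tau> + a\<^sup>2 * nx a \<tau>)
      + integral {s..t} (\<lambda>\<tau>. (a\<^sup>2 - 4 * a) * n a \<tau> + (n a \<tau>)\<^sup>2)"
    unfolding flux_eq_derivative_plus_lower_order using assms sub
    by (intro integral_add integrable_continuous_interval continuous_intros
        continuous_on_n_time continuous_on_nx_time) auto
  moreover have "at a within {0<..} = at a"
    using assms by (intro at_within_open) auto
  ultimately show ?thesis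
    by simp
qed

lemma tendsto_boundary_value: "t > 0 \<Longrightarrow> ((\<lambda>x. n x t) \<longlongrightarrow> boundary_value n t) (at_right 0)"
  unfolding boundary_value_def using boundary_limit tendsto_Lim[OF trivial_limit_at_right_real] by blast

lemma lower_order_time_integral_tendsto:
  assumes "0 < s" "s \<le> t"
  shows "(\<lambda>\<tau>. (boundary_value n \<tau>)\<^sup>2) integrable_on {s..t}"
    and "((\<lambda>a. integral {s..t} (\<lambda>\<tau>. (a\<^sup>2 - 4 * a) * n a \<tau> + (n a \<tau>)\<^sup>2)) \<longlongrightarrow>
      integral {s..t} (\<lambda>\<tau>. (boundary_value n \<tau>)\<^sup>2)) (at_right 0)"
proof -
  obtain M where M: "\<And>x \<tau>. x > 0 \<Longrightarrow> \<tau> \<in> {0..t} \<Longrightarrow> \<bar>n x \<tau>\<bar> \<le> M"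
    using locally_bounded by blast
  have bound: "\<bar>(a\<^sup>2 - 4 * a) * n a \<tau> + (n a \<tau>)\<^sup>2\<bar> \<le> 5 * M + M\<^sup>2"
    if "0 < a" "a < 1" "\<tau> \<in> {s..t}" for a \<tau>
  proof -
    have n_le: "\<bar>n a \<tau>\<bar> \<le> M"
      using that assms by (intro M) auto
    have "0 \<le> a\<^sup>2" "a\<^sup>2 \<le> 1"
      using that by (auto intro: power_le_one)
    then have "\<bar>a\<^sup>2 - 4 * a\<bar> \<le> 5"
      using that by linarith
    then have "\<bar>(a\<^sup>2 - 4 * a) * n a \<tau>\<bar> \<le> 5 * M"
      unfolding abs_mult using n_le by (intro mult_mono) auto
    moreover have "(n a \<tau>)\<^sup>2 \<le> M\<^sup>2"
      using power_mono[OF n_le abs_ge_zero, of 2] by simp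
    ultimately show ?thesis
      using zero_le_power2[of "n a \<tau>"] zero_le_power2[of M] by linarith
  qed
  have lim: "((\<lambda>a. (a\<^sup>2 - 4 * a) * n a \<tau> + (n a \<tau>)\<^sup>2) \<longlongrightarrow> (boundary_value n \<tau>)\<^sup>2) (at_right 0)"
    if "\<tau> \<in> {s..t}" for \<tau>
  proof -
    have "((\<lambda>a. (a\<^sup>2 - 4 * a) * n a \<tau> + (n a \<tau>)\<^sup>2) \<longlongrightarrow>
        (0\<^sup>2 - 4 * 0) * boundary_value n \<tau> + (boundary_value n \<tau>)\<^sup>2) (at_right 0)"
      using that assms by (intro tendsto_intros tendsto_boundary_value) auto
    then show ?thesis
      by simp
  qed
  have int: "(\<lambda>\<tau>. (a\<^sup>2 - 4 * a) * n a \<tau> + (n a \<tau>)\<^sup>2) integrable_on {s..t}" if "0 < a" for a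
    using that assms by (intro integrable_continuous_interval continuous_intros continuous_on_n_time) auto
  show "(\<lambda>\<tau>. (boundary_value n \<tau>)\<^sup>2) integrable_on {s..t}"
    and "((\<lambda>a. integral {s..t} (\<lambda>\<tau>. (a\<^sup>2 - 4 * a) * n a \<tau> + (n a \<tau>)\<^sup>2)) \<longlongrightarrow>
      integral {s..t} (\<lambda>\<tau>. (boundary_value n \<tau>)\<^sup>2)) (at_right 0)"
    using dominated_convergence_at_right[OF zero_less_one int integrable_const_ivl bound lim] by auto
qed


lemma boundary_flux_identity_pos:
  assumes "0 < s" "s \<le> t"
  shows "((\<lambda>\<tau>. (boundary_value n \<tau>)\<^sup>2) has_integral photon_number n s - photon_number n t) {s..t}"
proof -
  define Q where "Q a = integral {s..t} (\<lambda>\<tau>. a\<^sup>2 * n a \<tau>)" for a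
  define D where "D a = integral {s..t} (J a) - integral {s..t} (\<lambda>\<tau>. (a\<^sup>2 - 4 * a) * n a \<tau> + (n a \<tau>)\<^sup>2)"
    for a
  obtain M where M: "\<And>x \<tau>. x > 0 \<Longrightarrow> \<tau> \<in> {0..t} \<Longrightarrow> \<bar>n x \<tau>\<bar> \<le> M"
    using locally_bounded by blast
  have "(Q has_real_derivative D a) (at a)" if "a > 0" for a
    unfolding Q_def D_def using assms that by (intro has_real_derivative_weighted_time_integral)
  moreover have "\<bar>Q a\<bar> \<le> M * (t - s) * a\<^sup>2" if "a > 0" for a
  proof -
    have "norm (Q a) \<le> a\<^sup>2 * M * (t - s)"
      unfolding Q_def
    proof (rule integral_bound)
      show "continuous_on {s..t} (\<lambda>\<tau>. a\<^sup>2 * n a \<tau>)"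
        using assms that by (intro continuous_intros continuous_on_n_time) auto
      show "norm (a\<^sup>2 * n a \<tau>) \<le> a\<^sup>2 * M" if "\<tau> \<in> {s..t}" for \<tau>
        using M[of a \<tau>] that assms \<open>a > 0\<close> by (simp add: abs_mult mult_left_mono)
    qed fact
    then show ?thesis
      by (simp add: algebra_simps)
  qed
  moreover have "(D \<longlongrightarrow> (photon_number n s - photon_number n t) -
      integral {s..t} (\<lambda>\<tau>. (boundary_value n \<tau>)\<^sup>2)) (at_right 0)"
    unfolding D_def using assms
    by (intro tendsto_diff flux_time_integral_tendsto_mass_difference lower_order_time_integral_tendsto)
  ultimately have "(photon_number n s - photon_number n t) - integral {s..t} (\<lambda>\<tau>. (boundary_value n \<tau>)\<^sup>2) = 0"
    by (rule deriv_limit_eq_0_if_quadratic_bound)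
  then show ?thesis
    using integrable_integral[OF lower_order_time_integral_tendsto(1)[OF assms]] by simp
qed

lemma photon_number_tendsto_at_right_0: "(photon_number n \<longlongrightarrow> photon_number n 0) (at_right 0)"
proof -
  have "((\<lambda>s. integral {0<..} (\<lambda>x. \<bar>n x s - n x 0\<bar>)) \<longlongrightarrow> 0) (at_right 0)"
    using L1_continuous[of 0] by (rule tendsto_within_subset) auto
  moreover have "\<forall>\<^sub>F s in at_right 0. norm (photon_number n s - photon_number n 0) \<le>
      integral {0<..} (\<lambda>x. \<bar>n x s - n x 0\<bar>)"
    using eventually_at_right_less[of 0]
  proof eventually_elim
    case (elim s)
    have "(\<lambda>x. n x s - n x 0) absolutely_integrable_on {0<..}"
      using elim by (intro absolutely_integrable_mass_difference) auto
    moreover have "photon_number n s - photon_number n 0 = integral {0<..} (\<lambda>x. n x s - n x 0)"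
      unfolding photon_number_def using elim
      by (intro integral_diff[symmetric] set_lebesgue_integral_eq_integral(1) integrable) auto
    ultimately show ?case
      using integral_norm_bound_integral[of "\<lambda>x. n x s - n x 0" "{0<..}" "\<lambda>x. \<bar>n x s - n x 0\<bar>"]
      by (simp add: absolutely_integrable_on_def)
  qed
  ultimately have "((\<lambda>s. photon_number n s - photon_number n 0) \<longlongrightarrow> 0) (at_right 0)"
    by (rule Lim_null_comparison[rotated])
  then show ?thesis
    by (simp add: LIM_zero_iff)
qed

theorem photon_number_balance:
  assumes "0 \<le> s" "s \<le> t"
  shows "((\<lambda>\<tau>. (boundary_value n \<tau>)\<^sup>2) has_integral photon_number n s - photon_number n t) {s..t}"
proof (cases "0 < s \<or> s = t")
  case True
  with assms show ?thesis
    by (auto intro: boundary_flux_identity_pos)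
next
  case False
  then have "s = 0" "0 < t"
    using assms by auto
  show ?thesis
    unfolding \<open>s = 0\<close>
  proof (rule has_integral_Icc_of_tendsto_at_right[where F = "\<lambda>c. photon_number n c - photon_number n t"])
    show "((\<lambda>\<tau>. (boundary_value n \<tau>)\<^sup>2) has_integral photon_number n c - photon_number n t) {c..t}"
      if "0 < c" "c < t" for c
      using that by (intro boundary_flux_identity_pos) auto
    show "((\<lambda>c. photon_number n c - photon_number n t) \<longlongrightarrow> photon_number n 0 - photon_number n t)
        (at_right 0)"
      by (intro tendsto_diff photon_number_tendsto_at_right_0 tendsto_const)
  qed (use \<open>0 < t\<close> in auto)
qed
end

theorem proposition2p9:
  fixes n0 :: "real \<Rightarrow> real" and n :: "real \<Rightarrow> real \<Rightarrow> real" and s t :: real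
  assumes n0_nonneg: "\<forall>x>0. 0 \<le> n0 x"
    and n0_bounded: "\<exists>B. \<forall>x>0. \<bar>n0 x\<bar> \<le> B"
    and n0_meas: "set_borel_measurable lborel {0<..} n0"
    and n0_decay: "((\<lambda>x. x\<^sup>2 * n0 x) \<longlongrightarrow> 0) at_top"
    and sol: "kompaneets_global_solution n0 n"
    and st: "0 \<le> s" "s \<le> t"
  shows "((\<lambda>\<tau>. (boundary_value n \<tau>)\<^sup>2) has_integral
            (photon_number n s - photon_number n t)) {s..t}"
proof -
  \<comment> \<open>The hypotheses on \<open>n0\<close> only serve to guarantee that the global solution exists.\<close>
  obtain nx nt where "kompaneets_regular n nx nt"
    using kompaneets_global_solution_imp_regular[OF sol] .
  then show ?thesis
    using st by (rule kompaneets_regular.photon_number_balance)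
qed

end
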